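(* Let $q$ be a prime power and $f:\mathbb{F}_q\to\mathbb{F}_q$ be differentially $d$-uniform. Then \[|\mathrm{Im}(f)|\geq \left\lceil\frac{q}{d+1}\right\rceil.\] Moreover, if $|\mathrm{Im}(f)|=\left\lceil\frac{q}{d+1}\right\rceil=\frac{q+\varepsilon}{d+1}$ with $1\leq\varepsilon\leq d$, then \[\sum_{y\in\mathrm{Im}(f)}(\omega(y)-(d+1))^2\leq (d+1)(\varepsilon-1)+1.\]
   Context: A map $f:\mathbb{F}_q\to\mathbb{F}_q$ is called differentially $d$-uniform ($d$-uniform) if $d=\max_{a\neq 0,\,b\in\mathbb{F}_q}|\{x\in\mathbb{F}_q: f(x+a)-f(x)=b\}|$. $\mathrm{Im}(f)$ is the image set of $f$, and for $y\in\mathbb{F}_q$, $\omega(y)=|f^{-1}(\{y\})|$ is the number of preimages of $y$ under $f$. *)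

theory Defs
  imports Complex_Main
begin

text \<open>The finite field F_q is modelled as a type of class {field, finite}; q = CARD('a).
  Every finite field has prime power order, so "q a prime power" is automatic.\<close>

definition diff_uniformity :: "('a::{field,finite} \<Rightarrow> 'a) \<Rightarrow> nat" where
  "diff_uniformity f =
     Max {card {x. f (x + a) - f x = b} | a b. a \<noteq> 0}"

definition diff_uniform :: "('a::{field,finite} \<Rightarrow> 'a) \<Rightarrow> nat \<Rightarrow> bool" where
  "diff_uniform f d \<longleftrightarrow> d = diff_uniformity f"

definition preimage_count :: "('a \<Rightarrow> 'b) \<Rightarrow> 'b \<Rightarrow> nat" where
  "preimage_count f y = card (f -` {y})"

end

theory Submission
  imports Defs
begin

text \<open>Count the pairs \<open>(x, z)\<close> with \<open>f x = f z\<close> in two ways: grouped by the common value they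
  number \<open>\<Sum>y. \<omega>(y)\<^sup>2\<close>; grouped by the difference \<open>a = z - x\<close> they number
  \<open>\<Sum>a. #{x. f (x + a) = f x} \<le> q + (q - 1) d\<close>. Expanding the nonnegative sum
  \<open>\<Sum>y\<in>Im(f). (\<omega>(y) - (d + 1))\<^sup>2\<close> with \<open>\<Sum>y. \<omega>(y) = q\<close> then bounds it by
  \<open>(d + 1)((d + 1)|Im(f)| - q) - d\<close>, which yields both claims.\<close>

lemma sum_preimage_count:
  fixes f :: "'a::finite \<Rightarrow> 'b"
  shows "(\<Sum>y\<in>range f. preimage_count f y) = card (UNIV :: 'a set)"
proof -
  have "card (\<Union>y\<in>range f. f -` {y}) = (\<Sum>y\<in>range f. card (f -` {y}))"
    by (rule card_UN_disjoint) auto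
  moreover have "(\<Union>y\<in>range f. f -` {y}) = UNIV" by blast
  ultimately show ?thesis unfolding preimage_count_def by simp
qed

lemma card_equal_value_pairs:
  fixes f :: "'a::finite \<Rightarrow> 'b"
  shows "card {(x, z). f x = f z} = (\<Sum>y\<in>range f. (preimage_count f y)\<^sup>2)"
proof -
  have "card {(x, z). f x = f z} = card (\<Union>y\<in>range f. f -` {y} \<times> f -` {y})"
    by (rule arg_cong [where f = card]) auto
  also have "\<dots> = (\<Sum>y\<in>range f. card (f -` {y} \<times> f -` {y}))"
    by (rule card_UN_disjoint) auto
  finally show ?thesis
    unfolding preimage_count_def by (simp add: card_cartesian_product power2_eq_square)
qed

lemma card_equal_value_pairs_by_difference:
  fixes f :: "'a::{ab_group_add,finite} \<Rightarrow> 'b::ab_group_add"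
  shows "card {(x, z). f x = f z} = (\<Sum>a\<in>UNIV. card {x. f (x + a) - f x = 0})"
proof -
  have "bij_betw (\<lambda>(x, z). (z - x, x)) {(x, z). f x = f z} (SIGMA a:UNIV. {x. f (x + a) - f x = 0})"
    by (rule bij_betw_byWitness[where f' = "\<lambda>(a, x). (x, x + a)"]) auto
  then have "card {(x, z). f x = f z} = card (SIGMA a:UNIV. {x. f (x + a) - f x = 0})"
    by (rule bij_betw_same_card)
  then show ?thesis by (simp add: card_SigmaI)
qed

lemma diff_uniform_card_le:
  fixes f :: "'a::{field,finite} \<Rightarrow> 'a"
  assumes "diff_uniform f d" and "a \<noteq> 0"
  shows "card {x. f (x + a) - f x = b} \<le> d"
proof -
  let ?D = "{card {x. f (x + a) - f x = b} | a b. a \<noteq> (0::'a)}"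
  have "?D \<subseteq> (\<lambda>(a, b). card {x. f (x + a) - f x = b}) ` UNIV" by auto
  then have "finite ?D" by (rule finite_subset) simp
  moreover have "card {x. f (x + a) - f x = b} \<in> ?D" using assms(2) by blast
  ultimately show ?thesis
    using assms(1) unfolding diff_uniform_def diff_uniformity_def by simp
qed

lemma sum_preimage_count_sq_le:
  fixes f :: "'a::{field,finite} \<Rightarrow> 'a"
  assumes "diff_uniform f d"
  shows "(\<Sum>y\<in>range f. (preimage_count f y)\<^sup>2) \<le> card (UNIV :: 'a set) + (card (UNIV :: 'a set) - 1) * d"
proof -
  let ?g = "\<lambda>a. card {x. f (x + a) - f x = 0}"
  have "(\<Sum>y\<in>range f. (preimage_count f y)\<^sup>2) = ?g 0 + (\<Sum>a\<in>UNIV - {0}. ?g a)"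
    by (simp add: card_equal_value_pairs [symmetric] card_equal_value_pairs_by_difference
        sum.remove [of UNIV 0])
  also have "?g 0 = card (UNIV :: 'a set)" by simp
  also have "(\<Sum>a\<in>UNIV - {0}. ?g a) \<le> (\<Sum>a\<in>UNIV - {0::'a}. d)"
    by (intro sum_mono diff_uniform_card_le [OF assms]) simp
  also have "\<dots> = (card (UNIV :: 'a set) - 1) * d" by (simp add: card_Diff_singleton)
  finally show ?thesis by simp
qed

lemma sum_sq_preimage_deviation_le:
  fixes f :: "'a::{field,finite} \<Rightarrow> 'a"
  assumes "diff_uniform f d"
  defines "c \<equiv> int (d + 1)"
  shows "(\<Sum>y\<in>range f. (int (preimage_count f y) - c)\<^sup>2)
           \<le> c * (c * int (card (range f)) - int (card (UNIV :: 'a set))) - int d"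
proof -
  let ?\<omega> = "\<lambda>y. int (preimage_count f y)"
  have "card (UNIV :: 'a set) \<ge> 1"
    using finite_UNIV_card_ge_0 [where 'a = 'a] by simp
  moreover have "int (\<Sum>y\<in>range f. (preimage_count f y)\<^sup>2)
                   \<le> int (card (UNIV :: 'a set) + (card (UNIV :: 'a set) - 1) * d)"
    using sum_preimage_count_sq_le [OF assms(1)] by (simp only: of_nat_le_iff)
  ultimately have sq: "(\<Sum>y\<in>range f. ?\<omega> y ^ 2)
                   \<le> int (card (UNIV :: 'a set)) + (int (card (UNIV :: 'a set)) - 1) * int d"
    by (simp add: of_nat_diff)
  have "(\<Sum>y\<in>range f. (?\<omega> y - c)\<^sup>2)
      = (\<Sum>y\<in>range f. ?\<omega> y ^ 2) - 2 * c * (\<Sum>y\<in>range f. ?\<omega> y) + int (card (range f)) * c\<^sup>2"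
    by (simp add: power2_diff sum.distrib sum_subtractf sum_distrib_left algebra_simps)
  also have "(\<Sum>y\<in>range f. ?\<omega> y) = int (card (UNIV :: 'a set))"
    using sum_preimage_count [of f] by (metis of_nat_sum)
  finally show ?thesis
    using sq unfolding c_def by (simp add: power2_eq_square algebra_simps)
qed

theorem theorem2p6:
  fixes f :: "'a::{field,finite} \<Rightarrow> 'a" and d :: nat
  assumes "diff_uniform f d"
  shows "int (card (range f)) \<ge> \<lceil>real (card (UNIV :: 'a set)) / real (d + 1)\<rceil>
     \<and> (\<forall>\<epsilon>::nat.
          int (card (range f)) = \<lceil>real (card (UNIV :: 'a set)) / real (d + 1)\<rceil> \<and>
          real (card (range f)) = (real (card (UNIV :: 'a set)) + real \<epsilon>) / real (d + 1) \<and>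
          1 \<le> \<epsilon> \<and> \<epsilon> \<le> d \<longrightarrow>
           (\<Sum>y\<in>range f. (int (preimage_count f y) - int (d + 1))^2)
             \<le> int (d + 1) * (int \<epsilon> - 1) + 1)"
proof -
  let ?n = "card (range f)" and ?q = "card (UNIV :: 'a set)" and ?c = "int (d + 1)"
  let ?S = "\<Sum>y\<in>range f. (int (preimage_count f y) - ?c)\<^sup>2"
  have deviation: "?S \<le> ?c * (?c * int ?n - int ?q) - int d"
    by (rule sum_sq_preimage_deviation_le [OF assms])
  have "0 \<le> ?S" by (simp add: sum_nonneg)
  with deviation have "0 \<le> ?c * (?c * int ?n - int ?q)" by linarith
  then have "int ?q \<le> ?c * int ?n" by (simp add: zero_le_mult_iff)
  then have "?q \<le> (d + 1) * ?n"
    by (simp only: of_nat_mult [symmetric] of_nat_le_iff)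
  then have "real ?q / real (d + 1) \<le> real ?n"
    by (simp add: pos_divide_le_eq mult.commute flip: of_nat_Suc of_nat_mult)
  then have image_bound: "\<lceil>real ?q / real (d + 1)\<rceil> \<le> int ?n"
    by (simp add: ceiling_le_iff)
  have "?S \<le> ?c * (int \<epsilon> - 1) + 1"
    if "real ?n = (real ?q + real \<epsilon>) / real (d + 1)" for \<epsilon> :: nat
  proof -
    from that have "real ((d + 1) * ?n) = real (?q + \<epsilon>)" by (simp add: field_simps)
    then have "(d + 1) * ?n = ?q + \<epsilon>" by (simp only: of_nat_eq_iff)
    then have "?c * int ?n - int ?q = int \<epsilon>" by (metis add_diff_cancel_left' of_nat_add of_nat_mult)
    with deviation have "?S \<le> ?c * int \<epsilon> - int d" by simp
    then show ?thesis by (simp add: algebra_simps)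
  qed
  with image_bound show ?thesis by auto
qed

end
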